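(* Under the regularity condition (R-AD), $\sup_{1\le i\le m}\|\bar B_i-\tilde B_i\|_2=O_P\{\sqrt{Km\log m/n}\}$ as $n\to\infty$.
   Context: There are $m$ studies; study $i$ contains $n_i$ individuals with covariates $X_{i1},\dots,X_{in_i}\in\mathcal{X}\subseteq\mathbb{R}^p$ drawn i.i.d. from the conditional distribution (given study $i$) of a study population measure $\mathbb{P}$; $n=\sum_in_i$. $B=(B_1,\dots,B_K)^\top$ are basis functions with $B_1\equiv1$; $\bar B_i=n_i^{-1}\sum_jB(X_{ij})$ and $\tilde B_i=E_{\mathbb{P}}\{B(X)\mid G=i\}$. A target sample of size $n^*$ is also drawn; $\mathbb{Q}$ is the measure of the combined population. Further objects in (R-AD): study estimates $\hat\tau_i$ of $\tau_i=E_{\mathbb{P}}\{Y(1)-Y(0)\mid G=i\}$, scaling factors $c_i>0$, tolerances $\delta$, a convex twice-differentiable $\psi$ with $\psi'$ invertible, $h(x)=\psi(-x)$, $\rho(v)=-v(h')^{-1}(v)+h\{(h')^{-1}(v)\}$, and vectors $\tilde\lambda_3,\tilde\lambda_4\in\mathbb{R}^K$ (model coefficient vectors). (R-AD): (a) constants $C_0>0$, $C_1<C_2<0$ with $C_1\le m\rho''(v)\le C_2$ for all $v$ in a neighborhood of $\tilde B_i^\top\tilde\lambda_3/c_i$ ($i=1,\dots,m$), and $|m\rho'(v)|\le C_0$ for all $v=B(x)^\top\lambda$, $x\in\mathcal{X}$, $\lambda$; (b) $\sup_x\|B(x)\|_2\le CK^{1/2}$, $\|E_{\mathbb{Q}}\{B(X)B(X)^\top\}\|_F\le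 C$, $\|E_{\mathbb{Q}}\{\bar B_i\bar B_i^\top\}\|_F\le C$, and $\{B(x):x\in\mathcal{X}\}$ is convex; (c) $K=O\{(n/m)^{a_1}\}$, $K=O(m^{a_2})$ with $0<a_1<1/4$, $0<a_2<1$; (d) smallest eigenvalue of $E_{\mathbb{Q}}\{B(X)B(X)^\top\}$ exceeds a constant $C>0$; (e) $\|\delta\|_2=O_P\{\sqrt{K^3m\log m/n}\}$; (f) $n^*/n$ and $m(\inf_in_i)/n$ converge to finite positive constants, $m=O(n^a)$ with $0<a<1$; (g) $\sqrt{n_i}(\hat\tau_i-\tau_i)$ sub-Gaussian with variance proxy bounded by $C$; (h) $c_i\in[c_{\mathrm{lo}},c_{\mathrm{hi}}]$ with $0<c_{\mathrm{lo}}\le c_{\mathrm{hi}}$; (i) $\|\tilde\lambda_3\|_2,\|\tilde\lambda_4\|_2\le CK^{1/2}$. *)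

theory Defs
  imports "HOL-Probability.Probability" "HOL-Library.Landau_Symbols"
begin

definition vnorm :: "nat \<Rightarrow> (nat \<Rightarrow> real) \<Rightarrow> real" where
  "vnorm K v = sqrt (\<Sum>k<K. (v k)\<^sup>2)"

definition Bbar :: "('x \<Rightarrow> nat \<Rightarrow> real) \<Rightarrow> nat \<Rightarrow> (nat \<Rightarrow> 'w \<Rightarrow> 'x) \<Rightarrow> 'w \<Rightarrow> nat \<Rightarrow> real" where
  "Bbar B ni Xi \<omega> k = (\<Sum>j<ni. B (Xi j \<omega>) k) / real ni"

text \<open>Study-level population mean Btilde_i = E{B(X) | G = i}; since the X_ij are drawn
  from the conditional distribution given study i, this is E[B(X_i1)].\<close>
definition Btilde :: "'w measure \<Rightarrow> ('x \<Rightarrow> nat \<Rightarrow> real) \<Rightarrow> ('w \<Rightarrow> 'x) \<Rightarrow> nat \<Rightarrow> real" where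
  "Btilde \<Omega> B Xi1 k = (\<integral>\<omega>. B (Xi1 \<omega>) k \<partial>\<Omega>)"

definition bigO_P :: "(nat \<Rightarrow> 'w measure) \<Rightarrow> (nat \<Rightarrow> 'w \<Rightarrow> real) \<Rightarrow> (nat \<Rightarrow> real) \<Rightarrow> bool" where
  "bigO_P \<Omega> T r \<longleftrightarrow> (\<forall>\<epsilon>>0. \<exists>M. \<exists>N. \<forall>\<nu>\<ge>N.
      measure (\<Omega> \<nu>) {\<omega> \<in> space (\<Omega> \<nu>). \<bar>T \<nu> \<omega>\<bar> > M * r \<nu>} < \<epsilon>)"

end

theory Submission
  imports Defs
begin

(* Condition (d) and the Frobenius bound in (b) force K <= C^2 / Cmin^2: the quadratic form at
   a unit vector is a diagonal entry, so all K diagonal entries exceed Cmin. Each coordinate of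
   Bbar_i - Btilde_i is a mean of n_i i.i.d. variables bounded by C sqrt K, so by Hoeffding it
   exceeds t = L sqrt (m log m / n) with probability at most 2 / m^2, as soon as n_i m / n is
   bounded below (condition (f)) and L is large. A union bound over the m K coordinates bounds the
   probability that the largest norm exceeds sqrt K * t by 2 K / m, which tends to 0. *)

lemma abs_le_vnorm: "k < K \<Longrightarrow> \<bar>v k\<bar> \<le> vnorm K v"
  unfolding vnorm_def
  by (metis real_sqrt_abs real_sqrt_le_mono member_le_sum lessThan_iff zero_le_power2 finite_lessThan)

lemma vnorm_nonneg: "vnorm K v \<ge> 0"
  unfolding vnorm_def by (simp add: sum_nonneg)

lemma vnorm_le_sqrt_mult:
  assumes "\<And>k. k < K \<Longrightarrow> \<bar>v k\<bar> \<le> t"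
  shows "vnorm K v \<le> sqrt (real K) * t"
proof (cases "K = 0")
  case False
  then have "t \<ge> 0" using assms[of 0] by simp
  have "(\<Sum>k<K. (v k)\<^sup>2) \<le> (\<Sum>k<K. t\<^sup>2)"
    using assms by (intro sum_mono) (metis abs_ge_zero lessThan_iff power2_abs power_mono)
  then have "vnorm K v \<le> sqrt (real K * t\<^sup>2)" unfolding vnorm_def by simp
  also have "\<dots> = sqrt (real K) * t" using \<open>t \<ge> 0\<close> by (simp add: real_sqrt_mult)
  finally show ?thesis .
qed (simp add: vnorm_def)

lemma Max_vnorm_nonneg:
  assumes "finite I" "I \<noteq> {}"
  shows "0 \<le> Max ((\<lambda>i. vnorm K (v i)) ` I)"
proof -
  obtain i where "i \<in> I" using \<open>I \<noteq> {}\<close> by blast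
  have "0 \<le> vnorm K (v i)" by (rule vnorm_nonneg)
  also have "\<dots> \<le> Max ((\<lambda>i. vnorm K (v i)) ` I)" using assms \<open>i \<in> I\<close> by (intro Max_ge) auto
  finally show ?thesis .
qed

lemma sum_square_unit_vector:
  fixes k K :: nat
  assumes "k < K"
  shows "(\<Sum>j<K. (of_bool (j = k) :: real)\<^sup>2) = 1"
proof -
  have "(\<Sum>j<K. (of_bool (j = k) :: real)\<^sup>2) = (\<Sum>j<K. if j = k then 1 else 0)"
    by (intro sum.cong refl) simp
  then show ?thesis using assms by simp
qed

lemma quadratic_form_unit_vector:
  fixes q :: "nat \<Rightarrow> nat \<Rightarrow> real"
  assumes "k < K"
  shows "(\<Sum>j<K. \<Sum>l<K. of_bool (j = k) * of_bool (l = k) * q j l) = q k k"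
proof -
  have "(\<Sum>l<K. of_bool (j = k) * of_bool (l = k) * q j l) = (if j = k then q k k else 0)" for j
  proof -
    have "(\<Sum>l<K. of_bool (j = k) * of_bool (l = k) * q j l)
        = (\<Sum>l<K. if l = k then of_bool (j = k) * q j k else 0)"
      by (intro sum.cong refl) simp
    then show ?thesis using assms by simp
  qed
  then show ?thesis using assms by simp
qed

lemma dim_le_of_min_eigenvalue:
  fixes q :: "nat \<Rightarrow> nat \<Rightarrow> real"
  assumes "c > 0"
    and eig: "\<And>v. (\<Sum>k<K. (v k)\<^sup>2) = 1 \<Longrightarrow> c < (\<Sum>k<K. \<Sum>l<K. v k * v l * q k l)"
    and frob: "sqrt (\<Sum>k<K. \<Sum>l<K. (q k l)\<^sup>2) \<le> F"
  shows "real K \<le> F\<^sup>2 / c\<^sup>2"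
proof -
  have diag: "c < q k k" if "k < K" for k
    using eig[OF sum_square_unit_vector[OF that]] quadratic_form_unit_vector[OF that] by simp
  have "real K * c\<^sup>2 = (\<Sum>k<K. c\<^sup>2)" by simp
  also have "\<dots> \<le> (\<Sum>k<K. (q k k)\<^sup>2)"
    using diag \<open>c > 0\<close> by (intro sum_mono power_mono) (auto intro: less_imp_le)
  also have "\<dots> \<le> (\<Sum>k<K. \<Sum>l<K. (q k l)\<^sup>2)"
    by (intro sum_mono member_le_sum) auto
  also have "\<dots> \<le> F\<^sup>2"
    using frob by (rule sqrt_le_D)
  finally show ?thesis using \<open>c > 0\<close> by (simp add: pos_le_divide_eq)
qed

lemma (in prob_space) hoeffding_sample_mean:
  fixes Z :: "nat \<Rightarrow> 'a \<Rightarrow> 'x::topological_space" and f :: "'x \<Rightarrow> real"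
  assumes N: "N \<ge> 1" and f: "f \<in> borel_measurable borel"
    and indep: "indep_vars (\<lambda>_. borel) Z {..<N}"
    and Z: "\<And>j. j < N \<Longrightarrow> Z j \<in> borel_measurable M"
    and ident: "\<And>j. j < N \<Longrightarrow> distr M borel (Z j) = distr M borel (Z 0)"
    and bounded: "\<And>j \<omega>. j < N \<Longrightarrow> \<omega> \<in> space M \<Longrightarrow> \<bar>f (Z j \<omega>)\<bar> \<le> D"
    and "D > 0" "\<epsilon> \<ge> 0"
  shows "prob {\<omega> \<in> space M. \<epsilon> \<le> \<bar>(\<Sum>j<N. f (Z j \<omega>)) / N - expectation (\<lambda>\<omega>. f (Z 0 \<omega>))\<bar>}
           \<le> 2 * exp (- 2 * real N * \<epsilon>\<^sup>2 / (2 * D)\<^sup>2)"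
proof -
  have Z0: "Z 0 \<in> borel_measurable M" using Z N by simp
  interpret H: Hoeffding_ineq_iid M "{..<N}" "\<lambda>j \<omega>. f (Z j \<omega>)" "\<lambda>\<omega>. f (Z 0 \<omega>)" "-D" D
    "expectation (\<lambda>\<omega>. f (Z 0 \<omega>))"
  proof unfold_locales
    show "indep_vars (\<lambda>_. borel) (\<lambda>j \<omega>. f (Z j \<omega>)) {..<N}"
      using f by (intro indep_vars_compose2[OF indep]) auto
    show "random_variable borel (\<lambda>\<omega>. f (Z 0 \<omega>))" using Z0 f by measurable
    show "AE \<omega> in M. f (Z 0 \<omega>) \<in> {-D..D}"
      using bounded[of 0] N by (intro AE_I2) (simp add: abs_le_iff minus_le_iff)
    fix j assume "j \<in> {..<N}"
    have "distr M borel (\<lambda>\<omega>. f (Z j \<omega>)) = distr (distr M borel (Z j)) borel f"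
      using Z \<open>j \<in> {..<N}\<close> f by (subst distr_distr) (auto simp: comp_def)
    also have "\<dots> = distr (distr M borel (Z 0)) borel f"
      using ident[of j] \<open>j \<in> {..<N}\<close> by simp
    also have "\<dots> = distr M borel (\<lambda>\<omega>. f (Z 0 \<omega>))"
      using Z0 f by (subst distr_distr) (auto simp: comp_def)
    finally show "distr M borel (\<lambda>\<omega>. f (Z j \<omega>)) = distr M borel (\<lambda>\<omega>. f (Z 0 \<omega>))" .
  qed simp
  have "-D < D" "{..<N} \<noteq> {}" using \<open>D > 0\<close> N by (auto simp: lessThan_empty_iff)
  from H.Hoeffding_ineq_abs_ge'[OF \<open>\<epsilon> \<ge> 0\<close> this] show ?thesis
    by (simp only: card_lessThan diff_minus_eq_add mult_2[symmetric])
qed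

lemma hoeffding_exp_le_inverse_square:
  fixes n D L \<rho> :: real and m N :: nat
  assumes "m \<ge> 1" "n > 0" "D > 0" "\<rho> * n \<le> real N * real m" "4 * D\<^sup>2 \<le> \<rho> * L\<^sup>2"
  shows "exp (- 2 * real N * (L * sqrt (real m * ln (real m) / n))\<^sup>2 / (2 * D)\<^sup>2) \<le> 1 / (real m)\<^sup>2"
proof -
  let ?t = "L * sqrt (real m * ln (real m) / n)"
  have ln: "ln (real m) \<ge> 0" using \<open>m \<ge> 1\<close> by simp
  have "4 * D\<^sup>2 * n \<le> \<rho> * n * L\<^sup>2"
    using mult_right_mono[OF \<open>4 * D\<^sup>2 \<le> \<rho> * L\<^sup>2\<close>, of n] \<open>n > 0\<close> by (simp add: algebra_simps)
  also have "\<dots> \<le> real N * real m * L\<^sup>2"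
    using \<open>\<rho> * n \<le> real N * real m\<close> by (rule mult_right_mono) simp
  finally have "4 * D\<^sup>2 * n * ln (real m) \<le> real N * real m * L\<^sup>2 * ln (real m)"
    using ln by (rule mult_right_mono)
  then have "(2 * D)\<^sup>2 * ln (real m) \<le> real N * ?t\<^sup>2"
    using ln \<open>n > 0\<close> by (simp add: power_mult_distrib pos_le_divide_eq mult_ac)
  then have "- 2 * real N * ?t\<^sup>2 / (2 * D)\<^sup>2 \<le> - ln ((real m)\<^sup>2)"
    using \<open>D > 0\<close> \<open>m \<ge> 1\<close> by (simp add: pos_le_divide_eq ln_realpow mult_ac)
  then have "exp (- 2 * real N * ?t\<^sup>2 / (2 * D)\<^sup>2) \<le> exp (- ln ((real m)\<^sup>2))"
    by (simp only: exp_le_cancel_iff)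
  also have "\<dots> = 1 / (real m)\<^sup>2"
    using \<open>m \<ge> 1\<close> by (simp add: exp_minus inverse_eq_divide)
  finally show ?thesis .
qed

lemma (in prob_space) prob_sample_mean_deviation_le_inverse_square:
  fixes Z :: "nat \<Rightarrow> 'a \<Rightarrow> 'x::topological_space" and f :: "'x \<Rightarrow> real" and n \<rho> L D :: real
  assumes N: "N \<ge> 1" and f: "f \<in> borel_measurable borel"
    and indep: "indep_vars (\<lambda>_. borel) Z {..<N}"
    and Z: "\<And>j. j < N \<Longrightarrow> Z j \<in> borel_measurable M"
    and ident: "\<And>j. j < N \<Longrightarrow> distr M borel (Z j) = distr M borel (Z 0)"
    and bounded: "\<And>j \<omega>. j < N \<Longrightarrow> \<omega> \<in> space M \<Longrightarrow> \<bar>f (Z j \<omega>)\<bar> \<le> D"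
    and "m \<ge> 1" "n > 0" "D > 0" "L \<ge> 0"
    and balanced: "\<rho> * n \<le> real N * real m" and large: "4 * D\<^sup>2 \<le> \<rho> * L\<^sup>2"
  shows "prob {\<omega> \<in> space M. L * sqrt (real m * ln (real m) / n) \<le>
           \<bar>(\<Sum>j<N. f (Z j \<omega>)) / N - expectation (\<lambda>\<omega>. f (Z 0 \<omega>))\<bar>} \<le> 2 / (real m)\<^sup>2"
proof -
  have "0 \<le> L * sqrt (real m * ln (real m) / n)" using \<open>m \<ge> 1\<close> \<open>n > 0\<close> \<open>L \<ge> 0\<close> by simp
  with N f indep Z ident bounded \<open>D > 0\<close>
  have "prob {\<omega> \<in> space M. L * sqrt (real m * ln (real m) / n) \<le>
           \<bar>(\<Sum>j<N. f (Z j \<omega>)) / N - expectation (\<lambda>\<omega>. f (Z 0 \<omega>))\<bar>}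
      \<le> 2 * exp (- 2 * real N * (L * sqrt (real m * ln (real m) / n))\<^sup>2 / (2 * D)\<^sup>2)"
    by (rule hoeffding_sample_mean)
  also have "\<dots> \<le> 2 * (1 / (real m)\<^sup>2)"
    using hoeffding_exp_le_inverse_square[OF \<open>m \<ge> 1\<close> \<open>n > 0\<close> \<open>D > 0\<close> balanced large]
    by (rule mult_left_mono) simp
  finally show ?thesis by simp
qed

lemma le_size_of_less_min_ratio:
  fixes ns :: "nat \<Rightarrow> nat" and \<rho> n :: real
  assumes "\<rho> < real m * real (Min (ns ` {..<m})) / n" "n > 0" "i < m"
  shows "\<rho> * n \<le> real (ns i) * real m"
proof -
  have "\<rho> * n < real m * real (Min (ns ` {..<m}))"
    using assms(1) unfolding pos_less_divide_eq[OF \<open>n > 0\<close>] .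
  also have "\<dots> \<le> real m * real (ns i)"
    using \<open>i < m\<close> by (intro mult_left_mono) auto
  finally show ?thesis by (simp add: mult.commute)
qed

lemma (in prob_space) prob_Max_vnorm_gt_le_sum:
  assumes "finite I" "I \<noteq> {}"
    and V: "\<And>i k. i \<in> I \<Longrightarrow> k < K \<Longrightarrow> (\<lambda>\<omega>. V i \<omega> k) \<in> borel_measurable M"
  shows "prob {\<omega> \<in> space M. sqrt (real K) * t < Max ((\<lambda>i. vnorm K (V i \<omega>)) ` I)}
           \<le> (\<Sum>i\<in>I. \<Sum>k<K. prob {\<omega> \<in> space M. t \<le> \<bar>V i \<omega> k\<bar>})"
proof -
  let ?E = "\<lambda>i k. {\<omega> \<in> space M. t \<le> \<bar>V i \<omega> k\<bar>}"
  have events: "?E i k \<in> events" if "i \<in> I" "k < K" for i k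
    using V[OF that] by measurable
  have "{\<omega> \<in> space M. sqrt (real K) * t < Max ((\<lambda>i. vnorm K (V i \<omega>)) ` I)} \<subseteq> (\<Union>i\<in>I. \<Union>k<K. ?E i k)"
  proof clarify
    fix \<omega> assume "\<omega> \<in> space M" "sqrt (real K) * t < Max ((\<lambda>i. vnorm K (V i \<omega>)) ` I)"
    then obtain i where "i \<in> I" "sqrt (real K) * t < vnorm K (V i \<omega>)"
      using assms by (auto simp: Max_gr_iff)
    then obtain k where "k < K" "t \<le> \<bar>V i \<omega> k\<bar>"
      by (meson not_le vnorm_le_sqrt_mult less_imp_le)
    with \<open>i \<in> I\<close> \<open>\<omega> \<in> space M\<close> show "\<omega> \<in> (\<Union>i\<in>I. \<Union>k<K. ?E i k)" by blast
  qed
  then have "prob {\<omega> \<in> space M. sqrt (real K) * t < Max ((\<lambda>i. vnorm K (V i \<omega>)) ` I)}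
      \<le> prob (\<Union>i\<in>I. \<Union>k<K. ?E i k)"
    using events \<open>finite I\<close> by (intro finite_measure_mono) auto
  also have "\<dots> \<le> (\<Sum>i\<in>I. prob (\<Union>k<K. ?E i k))"
    using events \<open>finite I\<close> by (intro measure_UNION_le) auto
  also have "\<dots> \<le> (\<Sum>i\<in>I. \<Sum>k<K. prob (?E i k))"
    using events by (intro sum_mono measure_UNION_le) auto
  finally show ?thesis .
qed

lemma borel_measurable_Bbar:
  assumes "\<And>j. j < N \<Longrightarrow> Z j \<in> borel_measurable M" "\<And>k. (\<lambda>x. B x k) \<in> borel_measurable borel"
  shows "(\<lambda>\<omega>. Bbar B N Z \<omega> k) \<in> borel_measurable M"
  unfolding Bbar_def using assms by measurable

lemma (in prob_space) prob_max_study_mean_deviation_le: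
  fixes X :: "nat \<Rightarrow> nat \<Rightarrow> 'a \<Rightarrow> 'x::topological_space" and B :: "'x \<Rightarrow> nat \<Rightarrow> real"
    and \<rho> C L :: real
  assumes "m \<ge> 1" "K \<ge> 1" and ns_pos: "\<And>i. i < m \<Longrightarrow> ns i \<ge> 1"
    and n_def: "n = (\<Sum>i<m. ns i)"
    and X_meas: "\<And>i j. i < m \<Longrightarrow> j < ns i \<Longrightarrow> X i j \<in> borel_measurable M"
    and X_indep: "\<And>i. i < m \<Longrightarrow> indep_vars (\<lambda>_. borel) (X i) {..<ns i}"
    and X_ident: "\<And>i j. i < m \<Longrightarrow> j < ns i \<Longrightarrow> distr M borel (X i j) = distr M borel (X i 0)"
    and X_range: "\<And>i j \<omega>. i < m \<Longrightarrow> j < ns i \<Longrightarrow> \<omega> \<in> space M \<Longrightarrow> X i j \<omega> \<in> S"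
    and B_meas: "\<And>k. (\<lambda>x. B x k) \<in> borel_measurable borel"
    and B_bounded: "\<And>x. x \<in> S \<Longrightarrow> vnorm K (B x) \<le> C * sqrt (real K)"
    and balanced: "\<rho> < real m * real (Min (ns ` {..<m})) / real n"
    and "C > 0" "L \<ge> 0" "4 * C\<^sup>2 * real K \<le> \<rho> * L\<^sup>2"
  shows "prob {\<omega> \<in> space M. L * sqrt (real K * real m * ln (real m) / real n) <
           \<bar>Max ((\<lambda>i. vnorm K (\<lambda>k. Bbar B (ns i) (X i) \<omega> k - Btilde M B (X i 0) k)) ` {..<m})\<bar>}
         \<le> 2 * real K / real m"
proof -
  let ?dev = "\<lambda>i \<omega> k. Bbar B (ns i) (X i) \<omega> k - Btilde M B (X i 0) k"
  define t where "t = L * sqrt (real m * ln (real m) / real n)"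
  have "ns 0 \<le> n" unfolding n_def using \<open>m \<ge> 1\<close> by (intro member_le_sum) auto
  then have n_pos: "real n > 0" using ns_pos[of 0] \<open>m \<ge> 1\<close> by simp
  have coordinate_bound: "prob {\<omega> \<in> space M. t \<le> \<bar>?dev i \<omega> k\<bar>} \<le> 2 / (real m)\<^sup>2"
    if "i < m" "k < K" for i k
    unfolding Bbar_def Btilde_def t_def
  proof (rule prob_sample_mean_deviation_le_inverse_square[where f = "\<lambda>x. B x k", OF ns_pos[OF that(1)]
        B_meas X_indep[OF that(1)] X_meas[OF that(1)] X_ident[OF that(1)] _ \<open>m \<ge> 1\<close> n_pos _ \<open>L \<ge> 0\<close>
        le_size_of_less_min_ratio[OF balanced n_pos that(1)]])
    show "\<bar>B (X i j \<omega>) k\<bar> \<le> C * sqrt (real K)" if "j < ns i" "\<omega> \<in> space M" for j \<omega>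
      using abs_le_vnorm[OF \<open>k < K\<close>] B_bounded[OF X_range[OF \<open>i < m\<close> that]] by (rule order_trans)
    show "0 < C * sqrt (real K)" using \<open>C > 0\<close> \<open>K \<ge> 1\<close> by simp
    show "4 * (C * sqrt (real K))\<^sup>2 \<le> \<rho> * L\<^sup>2"
      using \<open>4 * C\<^sup>2 * real K \<le> \<rho> * L\<^sup>2\<close> by (simp add: power_mult_distrib)
  qed
  have "L * sqrt (real K * real m * ln (real m) / real n) = sqrt (real K) * t"
    by (simp add: t_def real_sqrt_mult[symmetric] mult.assoc)
  moreover have "{..<m} \<noteq> {}" using \<open>m \<ge> 1\<close> by (simp add: lessThan_empty_iff)
  ultimately have "prob {\<omega> \<in> space M. L * sqrt (real K * real m * ln (real m) / real n) <
           \<bar>Max ((\<lambda>i. vnorm K (?dev i \<omega>)) ` {..<m})\<bar>}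
      = prob {\<omega> \<in> space M. sqrt (real K) * t < Max ((\<lambda>i. vnorm K (?dev i \<omega>)) ` {..<m})}"
    by (simp only: abs_of_nonneg[OF Max_vnorm_nonneg[OF finite_lessThan \<open>{..<m} \<noteq> {}\<close>]])
  also have "\<dots> \<le> (\<Sum>i<m. \<Sum>k<K. prob {\<omega> \<in> space M. t \<le> \<bar>?dev i \<omega> k\<bar>})"
    using \<open>{..<m} \<noteq> {}\<close>
    by (intro prob_Max_vnorm_gt_le_sum) (auto intro!: borel_measurable_diff borel_measurable_Bbar X_meas B_meas)
  also have "\<dots> \<le> (\<Sum>i<m. \<Sum>k<K. 2 / (real m)\<^sup>2)"
    using coordinate_bound by (intro sum_mono) auto
  also have "\<dots> = 2 * real K / real m"
    using \<open>m \<ge> 1\<close> by (simp add: power2_eq_square)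
  finally show ?thesis .
qed

lemma bigO_P_of_vanishing_tail:
  assumes tail: "eventually (\<lambda>\<nu>. measure (\<Omega> \<nu>) {\<omega> \<in> space (\<Omega> \<nu>). L * r \<nu> < \<bar>T \<nu> \<omega>\<bar>} \<le> b \<nu>) sequentially"
    and "b \<longlonglongrightarrow> 0"
  shows "bigO_P \<Omega> T r"
  unfolding bigO_P_def
proof (intro allI impI)
  fix \<epsilon> :: real assume "\<epsilon> > 0"
  with \<open>b \<longlonglongrightarrow> 0\<close> have "eventually (\<lambda>\<nu>. b \<nu> < \<epsilon>) sequentially"
    by (rule order_tendstoD)
  from eventually_conj[OF tail this] obtain N where
    "\<forall>\<nu>\<ge>N. measure (\<Omega> \<nu>) {\<omega> \<in> space (\<Omega> \<nu>). L * r \<nu> < \<bar>T \<nu> \<omega>\<bar>} \<le> b \<nu> \<and> b \<nu> < \<epsilon>"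
    unfolding eventually_sequentially by blast
  then show "\<exists>L N. \<forall>\<nu>\<ge>N. measure (\<Omega> \<nu>) {\<omega> \<in> space (\<Omega> \<nu>). \<bar>T \<nu> \<omega>\<bar> > L * r \<nu>} < \<epsilon>"
    by (blast intro: le_less_trans)
qed

theorem lemmaS7:
  fixes \<Omega> :: "nat \<Rightarrow> 'w measure"
    and Q :: "nat \<Rightarrow> (real ^ 'p) measure"
    and \<X> :: "(real ^ 'p) set"
    and m K n nstar :: "nat \<Rightarrow> nat"
    and ns :: "nat \<Rightarrow> nat \<Rightarrow> nat"
    and X :: "nat \<Rightarrow> nat \<Rightarrow> nat \<Rightarrow> 'w \<Rightarrow> real ^ 'p"
    and B :: "nat \<Rightarrow> real ^ 'p \<Rightarrow> nat \<Rightarrow> real"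
    and C Cmin a a1 a2 \<kappa>1 \<kappa>2 :: real
  assumes prob: "\<And>\<nu>. prob_space (\<Omega> \<nu>)"
    and probQ: "\<And>\<nu>. prob_space (Q \<nu>)"
    and m_pos: "\<And>\<nu>. m \<nu> \<ge> 1"
    and ns_pos: "\<And>\<nu> i. i < m \<nu> \<Longrightarrow> ns \<nu> i \<ge> 1"
    and n_def: "\<And>\<nu>. n \<nu> = (\<Sum>i<m \<nu>. ns \<nu> i)"
    and n_lim: "filterlim n at_top sequentially"
    and m_lim: "filterlim m at_top sequentially"
    and K_pos: "\<And>\<nu>. K \<nu> \<ge> 1"
    \<comment> \<open>sampling: X_{i1},...,X_{in_i} i.i.d. within study i, valued in the covariate space\<close>
    and X_meas: "\<And>\<nu> i j. i < m \<nu> \<Longrightarrow> j < ns \<nu> i \<Longrightarrow> X \<nu> i j \<in> borel_measurable (\<Omega> \<nu>)"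
    and X_indep: "\<And>\<nu> i. i < m \<nu> \<Longrightarrow>
        prob_space.indep_vars (\<Omega> \<nu>) (\<lambda>_. borel) (X \<nu> i) {..<ns \<nu> i}"
    and X_ident: "\<And>\<nu> i j. i < m \<nu> \<Longrightarrow> j < ns \<nu> i \<Longrightarrow>
        distr (\<Omega> \<nu>) borel (X \<nu> i j) = distr (\<Omega> \<nu>) borel (X \<nu> i 0)"
    and X_range: "\<And>\<nu> i j \<omega>. i < m \<nu> \<Longrightarrow> j < ns \<nu> i \<Longrightarrow> \<omega> \<in> space (\<Omega> \<nu>) \<Longrightarrow>
        X \<nu> i j \<omega> \<in> \<X>"
    \<comment> \<open>basis functions, B_1 = 1\<close>
    and B_meas: "\<And>\<nu> k. (\<lambda>x. B \<nu> x k) \<in> borel_measurable borel"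
    and B_one: "\<And>\<nu> x. B \<nu> x 0 = 1"
    \<comment> \<open>(b)\<close>
    and C_pos: "C > 0"
    and b_sup: "\<And>\<nu> x. x \<in> \<X> \<Longrightarrow> vnorm (K \<nu>) (B \<nu> x) \<le> C * sqrt (real (K \<nu>))"
    and b_Q: "\<And>\<nu>. sqrt (\<Sum>k<K \<nu>. \<Sum>l<K \<nu>. (\<integral>x. B \<nu> x k * B \<nu> x l \<partial>Q \<nu>)\<^sup>2) \<le> C"
    and b_Bbar: "\<And>\<nu> i. i < m \<nu> \<Longrightarrow>
        sqrt (\<Sum>k<K \<nu>. \<Sum>l<K \<nu>. (\<integral>\<omega>. Bbar (B \<nu>) (ns \<nu> i) (X \<nu> i) \<omega> k
              * Bbar (B \<nu>) (ns \<nu> i) (X \<nu> i) \<omega> l \<partial>\<Omega> \<nu>)\<^sup>2) \<le> C"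
    and b_convex: "\<And>\<nu> x y t. x \<in> \<X> \<Longrightarrow> y \<in> \<X> \<Longrightarrow> 0 \<le> t \<Longrightarrow> t \<le> 1 \<Longrightarrow>
        \<exists>z\<in>\<X>. \<forall>k<K \<nu>. B \<nu> z k = t * B \<nu> x k + (1 - t) * B \<nu> y k"
    \<comment> \<open>(c)\<close>
    and a1: "0 < a1" "a1 < 1/4" and a2: "0 < a2" "a2 < 1"
    and c1: "(\<lambda>\<nu>. real (K \<nu>)) \<in> O(\<lambda>\<nu>. (real (n \<nu>) / real (m \<nu>)) powr a1)"
    and c2: "(\<lambda>\<nu>. real (K \<nu>)) \<in> O(\<lambda>\<nu>. real (m \<nu>) powr a2)"
    \<comment> \<open>(d): smallest eigenvalue of E_Q{B B^T} exceeds Cmin > 0\<close>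
    and Cmin_pos: "Cmin > 0"
    and d: "\<And>\<nu> v. (\<Sum>k<K \<nu>. (v k)\<^sup>2) = 1 \<Longrightarrow>
        Cmin < (\<Sum>k<K \<nu>. \<Sum>l<K \<nu>. v k * v l * (\<integral>x. B \<nu> x k * B \<nu> x l \<partial>Q \<nu>))"
    \<comment> \<open>(f)\<close>
    and f1: "\<kappa>1 > 0" "(\<lambda>\<nu>. real (nstar \<nu>) / real (n \<nu>)) \<longlonglongrightarrow> \<kappa>1"
    and f2: "\<kappa>2 > 0" "(\<lambda>\<nu>. real (m \<nu>) * real (Min (ns \<nu> ` {..<m \<nu>})) / real (n \<nu>)) \<longlonglongrightarrow> \<kappa>2"
    and f3: "0 < a" "a < 1" "(\<lambda>\<nu>. real (m \<nu>)) \<in> O(\<lambda>\<nu>. real (n \<nu>) powr a)"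
  shows "bigO_P \<Omega>
           (\<lambda>\<nu> \<omega>. Max ((\<lambda>i. vnorm (K \<nu>) (\<lambda>k. Bbar (B \<nu>) (ns \<nu> i) (X \<nu> i) \<omega> k
                                   - Btilde (\<Omega> \<nu>) (B \<nu>) (X \<nu> i 0) k)) ` {..<m \<nu>}))
           (\<lambda>\<nu>. sqrt (real (K \<nu>) * real (m \<nu>) * ln (real (m \<nu>)) / real (n \<nu>)))"
proof -
  define Kmax where "Kmax = C\<^sup>2 / Cmin\<^sup>2"
  have K_le: "real (K \<nu>) \<le> Kmax" for \<nu>
    unfolding Kmax_def
    by (rule dim_le_of_min_eigenvalue[where q = "\<lambda>k l. \<integral>x. B \<nu> x k * B \<nu> x l \<partial>Q \<nu>", OF Cmin_pos d b_Q])
  define L where "L = sqrt (8 * C\<^sup>2 * Kmax / \<kappa>2)"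
  have "0 \<le> 8 * C\<^sup>2 * Kmax / \<kappa>2"
    using K_le[of 0] f2(1) by simp
  then have L_nonneg: "L \<ge> 0" and L_large: "4 * C\<^sup>2 * real (K \<nu>) \<le> \<kappa>2 / 2 * L\<^sup>2" for \<nu>
    using K_le[of \<nu>] C_pos f2(1) by (simp_all add: L_def)
  have "eventually (\<lambda>\<nu>. \<kappa>2 / 2 < real (m \<nu>) * real (Min (ns \<nu> ` {..<m \<nu>})) / real (n \<nu>)) sequentially"
    using f2 by (intro order_tendstoD) auto
  then have "eventually (\<lambda>\<nu>. measure (\<Omega> \<nu>) {\<omega> \<in> space (\<Omega> \<nu>).
      L * sqrt (real (K \<nu>) * real (m \<nu>) * ln (real (m \<nu>)) / real (n \<nu>)) <
      \<bar>Max ((\<lambda>i. vnorm (K \<nu>) (\<lambda>k. Bbar (B \<nu>) (ns \<nu> i) (X \<nu> i) \<omega> k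
                              - Btilde (\<Omega> \<nu>) (B \<nu>) (X \<nu> i 0) k)) ` {..<m \<nu>})\<bar>}
      \<le> 2 * Kmax / real (m \<nu>)) sequentially" (is "eventually (\<lambda>\<nu>. ?tail \<nu> \<le> _) _")
  proof (rule eventually_mono)
    fix \<nu> assume balance: "\<kappa>2 / 2 < real (m \<nu>) * real (Min (ns \<nu> ` {..<m \<nu>})) / real (n \<nu>)"
    interpret prob_space "\<Omega> \<nu>" by (rule prob)
    have "?tail \<nu> \<le> 2 * real (K \<nu>) / real (m \<nu>)"
      by (rule prob_max_study_mean_deviation_le)
        (fact m_pos K_pos ns_pos n_def X_meas X_indep X_ident X_range B_meas b_sup balance C_pos L_nonneg
          L_large)+
    also have "\<dots> \<le> 2 * Kmax / real (m \<nu>)"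
      using K_le[of \<nu>] by (intro divide_right_mono) auto
    finally show "?tail \<nu> \<le> 2 * Kmax / real (m \<nu>)" .
  qed
  moreover have "(\<lambda>\<nu>. 2 * Kmax / real (m \<nu>)) \<longlonglongrightarrow> 0"
    using filterlim_compose[OF filterlim_real_sequentially m_lim]
    by (intro tendsto_divide_0[OF tendsto_const]) (simp add: filterlim_at_top_imp_at_infinity)
  ultimately show ?thesis by (rule bigO_P_of_vanishing_tail)
qed

end
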